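(* Let $p_i(s)=\gamma_i/(m_is+d_i)$ for $i=1,\dots,n$, where $m_i\ge0$, $d_i>0$ and $\gamma_i>0$ for all $i$. Then there exists $h\in\mathrm{PR}\cap\mathscr{A}_0$ such that $p_1,\ldots,p_n\in\mathcal{P}_h$.
   Context: $\mathscr{H}_\infty$: functions analytic and bounded on $\mathrm{Re}(s)>0$; $\mathscr{A}_0$: those in $\mathscr{H}_\infty$ extending continuously to $j\mathbb{R}\cup\{\infty\}$. $g\in\mathrm{PR}$ if $g$ is analytic in $\mathrm{Re}(s)>0$, real for positive real $s$, and $\mathrm{Re}(g(s))\ge0$ for $\mathrm{Re}(s)>0$; $g\in\mathrm{ESPR}$ if moreover $g\in\mathscr{A}_0$ and $g-\epsilon\in\mathrm{PR}$ for some $\epsilon>0$. $\mathcal{P}_h:=\{p\in\mathscr{H}_\infty: p(0)\ne0,\ h(s)(1+p(s)/s)\in\mathrm{ESPR}\}$. *)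

theory Defs
  imports "HOL-Analysis.Analysis"
begin

definition RHP :: "complex set" where
  "RHP = {s. Re s > 0}"

definition cRHP :: "complex set" where
  "cRHP = {s. Re s \<ge> 0}"

definition Hinf :: "(complex \<Rightarrow> complex) set" where
  "Hinf = {f. f analytic_on RHP \<and> (\<exists>B. \<forall>s\<in>RHP. norm (f s) \<le> B)}"

definition A0 :: "(complex \<Rightarrow> complex) set" where
  "A0 = {f. f \<in> Hinf \<and>
          (\<exists>g. continuous_on cRHP g \<and> (\<forall>s\<in>RHP. g s = f s) \<and>
               (\<exists>L. \<forall>e>0. \<exists>R. \<forall>s\<in>cRHP. norm s \<ge> R \<longrightarrow> norm (g s - L) < e))}"

definition PR :: "(complex \<Rightarrow> complex) set" where
  "PR = {g. g analytic_on RHP \<and> (\<forall>x::real. x > 0 \<longrightarrow> g (complex_of_real x) \<in> \<real>) \<and>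
           (\<forall>s\<in>RHP. Re (g s) \<ge> 0)}"

definition ESPR :: "(complex \<Rightarrow> complex) set" where
  "ESPR = {g. g \<in> PR \<and> g \<in> A0 \<and> (\<exists>e::real. e > 0 \<and> (\<lambda>s. g s - complex_of_real e) \<in> PR)}"

definition Pset :: "(complex \<Rightarrow> complex) \<Rightarrow> (complex \<Rightarrow> complex) set" where
  "Pset h = {p. p \<in> Hinf \<and> p 0 \<noteq> 0 \<and> (\<lambda>s. h s * (1 + p s / s)) \<in> ESPR}"

end

theory Submission
  imports Defs
begin

text \<open>Take \<open>h(s) = s / (s + a)\<close> with \<open>a \<ge> 8 \<gamma>\<^sub>i / d\<^sub>i\<close> for all \<open>i\<close>. Then
  \<open>h(s) (1 + p\<^sub>i(s) / s) = (s + p\<^sub>i(s)) / (s + a)\<close> is a rational function, continuous on the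
  closed half-plane and tending to 1 at infinity, hence in \<open>A\<^sub>0\<close>. Writing \<open>s = x + iy\<close>,
  \<open>|s + a|\<^sup>2\<close> times its real part is
  \<open>x\<^sup>2 + y\<^sup>2 + a x + \<gamma> Re((m s + d)(s + a)) / |m s + d|\<^sup>2\<close>; the choice of \<open>a\<close> makes the
  last term dominate a small multiple of \<open>|s + a|\<^sup>2\<close> near the origin, while \<open>x\<^sup>2 + y\<^sup>2\<close>
  does so far away. So the real part is bounded below by some \<open>\<epsilon> > 0\<close>.\<close>

lemma sum_squares_shift_pos:
  fixes x y m d :: real
  assumes "0 \<le> x" "0 \<le> m" "0 < d"
  shows "0 < (m*x + d)\<^sup>2 + m\<^sup>2 * y\<^sup>2"
proof -
  have "0 < m*x + d"
    using assms by (simp add: add_nonneg_pos)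
  then show ?thesis
    by (intro add_pos_nonneg) auto
qed

lemma first_order_term_ge_neg:
  fixes x y m d a \<gamma> :: real
  assumes "0 \<le> x" "0 < m" "0 < d" "0 \<le> a" "0 \<le> \<gamma>"
  shows "- (\<gamma> / m) \<le> \<gamma> * ((m*x + d) * (x + a) - m * y\<^sup>2) / ((m*x + d)\<^sup>2 + m\<^sup>2 * y\<^sup>2)"
proof -
  define Q where "Q = (m*x + d)\<^sup>2 + m\<^sup>2 * y\<^sup>2"
  have Q: "0 < Q"
    unfolding Q_def using assms by (intro sum_squares_shift_pos) auto
  have "\<gamma> * m * y\<^sup>2 \<le> \<gamma> / m * Q"
    unfolding Q_def using assms by (simp add: field_simps power2_eq_square)
  moreover have "0 \<le> \<gamma> * ((m*x + d) * (x + a))"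
    using assms by simp
  ultimately have "- (\<gamma> / m) * Q \<le> \<gamma> * ((m*x + d) * (x + a) - m * y\<^sup>2)"
    by (simp add: algebra_simps)
  with Q show ?thesis
    unfolding Q_def by (simp add: le_divide_eq)
qed

lemma first_order_term_ge_half:
  fixes x y m d a \<gamma> :: real
  assumes "0 \<le> x" "0 \<le> m" "0 < d" "0 \<le> a" "0 \<le> \<gamma>" "2 * m * y\<^sup>2 \<le> d * a"
  shows "\<gamma> * (d * a / 2) / ((m*x + d)\<^sup>2 + m\<^sup>2 * y\<^sup>2)
           \<le> \<gamma> * ((m*x + d) * (x + a) - m * y\<^sup>2) / ((m*x + d)\<^sup>2 + m\<^sup>2 * y\<^sup>2)"
proof -
  have "d * a \<le> (m*x + d) * (x + a)"
    using assms by (intro mult_mono) auto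
  then have "d * a / 2 \<le> (m*x + d) * (x + a) - m * y\<^sup>2"
    using assms(6) by linarith
  then have "\<gamma> * (d * a / 2) \<le> \<gamma> * ((m*x + d) * (x + a) - m * y\<^sup>2)"
    using assms(5) by (rule mult_left_mono)
  then show ?thesis
    by (rule divide_right_mono) simp
qed

lemma sum_squares_shift_le:
  fixes x y m d a :: real
  assumes "0 \<le> x" "x \<le> 1" "0 \<le> m" "0 \<le> d" "m * y\<^sup>2 \<le> d * a"
  shows "(m*x + d)\<^sup>2 + m\<^sup>2 * y\<^sup>2 \<le> (m + d)\<^sup>2 + m * d * a"
proof -
  have "(m*x + d)\<^sup>2 \<le> (m + d)\<^sup>2"
    using assms by (intro power_mono) (auto simp: mult_left_le)
  moreover have "m\<^sup>2 * y\<^sup>2 \<le> m * d * a"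
    using mult_left_mono[OF assms(5,3)] by (simp add: power2_eq_square mult.assoc)
  ultimately show ?thesis
    by linarith
qed

text \<open>If \<open>y\<^sup>2\<close> is large, it pays for the possibly negative first-order term; otherwise that
  term is positive, and uniformly so for \<open>x \<le> 1\<close>, while for \<open>x \<ge> 1\<close> the term \<open>a x\<close> suffices.\<close>

lemma washout_constant_term_bound:
  fixes x y m d a \<gamma> e :: real
  assumes x: "0 \<le> x" and m: "0 \<le> m" and d: "0 < d" and a: "0 < a" and \<gamma>: "0 < \<gamma>"
    and \<gamma>_le: "8 * \<gamma> \<le> d * a"
    and e: "e * (2 * a) \<le> 1" "e * (8 * a * m) \<le> d"
      "e * (2 * a * ((m + d)\<^sup>2 + m * d * a)) \<le> \<gamma> * d"
  shows "e * a\<^sup>2 \<le> 3/4 * x\<^sup>2 + 3/4 * y\<^sup>2 + a * x / 2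
           + \<gamma> * ((m*x + d) * (x + a) - m * y\<^sup>2) / ((m*x + d)\<^sup>2 + m\<^sup>2 * y\<^sup>2)"
proof -
  define Q where "Q = (m*x + d)\<^sup>2 + m\<^sup>2 * y\<^sup>2"
  define T where "T = \<gamma> * ((m*x + d) * (x + a) - m * y\<^sup>2) / Q"
  have nonneg: "0 \<le> a * x" "0 \<le> x\<^sup>2" "0 \<le> y\<^sup>2" "0 \<le> m * y\<^sup>2"
    using a x m by simp_all
  have "e * a\<^sup>2 \<le> 3/4 * x\<^sup>2 + 3/4 * y\<^sup>2 + a * x / 2 + T"
  proof (cases "d * a \<le> 2 * m * y\<^sup>2")
    case True
    then have "0 < m"
      using mult_pos_pos[OF d a] m by (cases "m = 0") auto
    then have "- (\<gamma> / m) \<le> T"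
      unfolding T_def Q_def using x d a \<gamma> by (intro first_order_term_ge_neg) auto
    moreover have "e * a\<^sup>2 \<le> d * a / (8 * m)" "\<gamma> / m \<le> d * a / (8 * m)"
      "3 * (d * a / (8 * m)) \<le> 3/4 * y\<^sup>2" "0 \<le> d * a / (8 * m)"
      using \<open>0 < m\<close> a d e(2) \<gamma>_le True by (auto simp: field_simps power2_eq_square)
    ultimately show ?thesis
      using nonneg by linarith
  next
    case False
    then have T: "\<gamma> * (d * a / 2) / Q \<le> T"
      unfolding T_def Q_def using x m d a \<gamma> by (intro first_order_term_ge_half) auto
    have "e * a\<^sup>2 \<le> a * x / 2 + \<gamma> * (d * a / 2) / Q"
    proof (cases "1 \<le> x")
      case True
      have "e * a\<^sup>2 \<le> a * x / 2"
        using e(1) a True by (simp add: field_simps power2_eq_square)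
      moreover have "0 \<le> \<gamma> * (d * a / 2) / Q"
        unfolding Q_def using \<gamma> d a by simp
      ultimately show ?thesis
        by linarith
    next
      case False
      have "m * y\<^sup>2 \<le> d * a"
        using \<open>\<not> d * a \<le> 2 * m * y\<^sup>2\<close> nonneg(4) by linarith
      then have "Q \<le> (m + d)\<^sup>2 + m * d * a"
        unfolding Q_def using x False m d by (intro sum_squares_shift_le) auto
      moreover have "0 < Q"
        unfolding Q_def using x m d by (rule sum_squares_shift_pos)
      ultimately have "\<gamma> * (d * a / 2) / ((m + d)\<^sup>2 + m * d * a) \<le> \<gamma> * (d * a / 2) / Q"
        using \<gamma> d a by (intro divide_left_mono) auto
      moreover have "e * a\<^sup>2 \<le> \<gamma> * (d * a / 2) / ((m + d)\<^sup>2 + m * d * a)"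
      proof -
        have "e * a\<^sup>2 * ((m + d)\<^sup>2 + m * d * a) = a / 2 * (e * (2 * a * ((m + d)\<^sup>2 + m * d * a)))"
          by (simp add: power2_eq_square)
        also have "\<dots> \<le> a / 2 * (\<gamma> * d)"
          using e(3) a by (intro mult_left_mono) auto
        finally show ?thesis
          using a d m by (subst pos_le_divide_eq) (auto intro: add_pos_nonneg simp: mult_ac)
      qed
      ultimately show ?thesis
        using nonneg by linarith
    qed
    with T show ?thesis
      using nonneg by linarith
  qed
  then show ?thesis
    unfolding T_def Q_def .
qed

lemma washout_real_part_bound:
  fixes x y m d a \<gamma> e :: real
  assumes x: "0 \<le> x" and m: "0 \<le> m" and d: "0 < d" and a: "0 < a" and \<gamma>: "0 < \<gamma>"
    and \<gamma>_le: "8 * \<gamma> \<le> d * a"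
    and e: "e * 4 \<le> 1" "e * (2 * a) \<le> 1" "e * (8 * a * m) \<le> d"
      "e * (2 * a * ((m + d)\<^sup>2 + m * d * a)) \<le> \<gamma> * d"
  shows "e * ((x + a)\<^sup>2 + y\<^sup>2)
           \<le> x\<^sup>2 + y\<^sup>2 + a * x + \<gamma> * ((m*x + d) * (x + a) - m * y\<^sup>2) / ((m*x + d)\<^sup>2 + m\<^sup>2 * y\<^sup>2)"
proof -
  have quarter: "e * t \<le> t / 4" if "0 \<le> t" for t
    using mult_right_mono[OF e(1) that] by simp
  have "e * ((x + a)\<^sup>2 + y\<^sup>2) = e * x\<^sup>2 + e * y\<^sup>2 + 2 * (e * (a * x)) + e * a\<^sup>2"
    by (simp add: power2_eq_square algebra_simps)
  moreover have "e * x\<^sup>2 \<le> x\<^sup>2 / 4" "e * y\<^sup>2 \<le> y\<^sup>2 / 4" "e * (a * x) \<le> a * x / 4"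
    using quarter[of "x\<^sup>2"] quarter[of "y\<^sup>2"] quarter[of "a * x"] a x by simp_all
  ultimately show ?thesis
    using washout_constant_term_bound[OF x m d a \<gamma> \<gamma>_le e(2-4), of y] by linarith
qed

lemma open_RHP: "open RHP"
  unfolding RHP_def by (rule open_halfspace_Re_gt)

lemma le_norm_mult_add_of_real:
  assumes "0 \<le> Re s" "0 \<le> m"
  shows "d \<le> cmod (of_real m * s + of_real d)"
proof -
  have "d \<le> Re (of_real m * s + of_real d)"
    using assms by simp
  also have "\<dots> \<le> cmod (of_real m * s + of_real d)"
    by (rule complex_Re_le_cmod)
  finally show ?thesis .
qed

lemma norm_le_norm_add_of_real:
  assumes "0 \<le> Re s" "0 \<le> a"
  shows "cmod s \<le> cmod (s + of_real a)"
proof -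
  have "(Re s)\<^sup>2 \<le> (Re s + a)\<^sup>2"
    using assms by (intro power_mono) auto
  then have "(cmod s)\<^sup>2 \<le> (cmod (s + of_real a))\<^sup>2"
    by (simp add: cmod_power2)
  then show ?thesis
    by (rule power2_le_imp_le) simp
qed

lemma mult_add_of_real_neq_0:
  assumes "0 \<le> Re s" "0 \<le> m" "0 < d"
  shows "of_real m * s + of_real d \<noteq> 0"
  using le_norm_mult_add_of_real[OF assms(1,2), of d] assms(3) by auto

lemma A0_I:
  assumes hol: "g holomorphic_on RHP" and cont: "continuous_on cRHP g"
    and eq: "\<And>s. s \<in> RHP \<Longrightarrow> f s = g s" and a: "0 < a"
    and decay: "\<And>s. s \<in> cRHP \<Longrightarrow> cmod (g s - L) \<le> C / cmod (s + of_real a)"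
  shows "f \<in> A0"
proof -
  have "f holomorphic_on RHP"
    using hol by (rule holomorphic_transform) (simp add: eq)
  then have analytic: "f analytic_on RHP"
    by (simp add: analytic_on_open open_RHP)
  have a_le: "a \<le> cmod (s + of_real a)" if "s \<in> cRHP" for s
    using le_norm_mult_add_of_real[of s 1 a] that by (simp add: cRHP_def)
  have C: "0 \<le> C"
  proof -
    have "cmod (g 0 - L) \<le> C / a"
      using decay[of 0] a by (simp add: cRHP_def)
    then have "0 \<le> C / a"
      by (rule order_trans[OF norm_ge_zero])
    then show ?thesis
      using a by (simp add: zero_le_divide_iff)
  qed
  have "cmod (f s) \<le> cmod L + C / a" if "s \<in> RHP" for s
  proof -
    have s: "s \<in> cRHP"
      using that by (simp add: RHP_def cRHP_def)
    have "cmod (f s) \<le> cmod L + cmod (g s - L)"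
      using eq[OF that] norm_triangle_ineq2[of "g s" L] by simp
    also have "\<dots> \<le> cmod L + C / cmod (s + of_real a)"
      using decay[OF s] by simp
    also have "\<dots> \<le> cmod L + C / a"
      using a_le[OF s] a C by (simp add: frac_le)
    finally show ?thesis .
  qed
  then have "f \<in> Hinf"
    unfolding Hinf_def using analytic by blast
  moreover have "\<exists>R. \<forall>s\<in>cRHP. R \<le> cmod s \<longrightarrow> cmod (g s - L) < \<epsilon>" if "0 < \<epsilon>" for \<epsilon>
  proof (intro exI ballI impI)
    fix s assume s: "s \<in> cRHP" and R: "C / \<epsilon> + 1 \<le> cmod s"
    have "0 \<le> C / \<epsilon>"
      using C that by simp
    with R have s_pos: "0 < cmod s"
      by linarith
    have s_le: "cmod s \<le> cmod (s + of_real a)"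
      using s a by (intro norm_le_norm_add_of_real) (auto simp: cRHP_def)
    have "cmod (g s - L) \<le> C / cmod (s + of_real a)"
      by (rule decay[OF s])
    also have "\<dots> \<le> C / cmod s"
      using s_le s_pos by (intro divide_left_mono C mult_pos_pos) auto
    also have "\<dots> < \<epsilon>"
    proof -
      have "C + \<epsilon> \<le> \<epsilon> * cmod s"
        using mult_left_mono[OF R, of \<epsilon>] that by (simp add: distrib_left)
      then show ?thesis
        unfolding pos_divide_less_eq[OF s_pos] using that by linarith
    qed
    finally show "cmod (g s - L) < \<epsilon>" .
  qed
  ultimately show ?thesis
    unfolding A0_def using cont eq by (intro CollectI conjI exI[of _ g]) auto
qed

lemma ESPR_I:
  assumes "f \<in> A0" and real: "\<And>x. 0 < x \<Longrightarrow> f (of_real x) \<in> \<real>"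
    and "0 < e" and Re_ge: "\<And>s. s \<in> RHP \<Longrightarrow> e \<le> Re (f s)"
  shows "f \<in> ESPR"
proof -
  have analytic: "f analytic_on RHP"
    using \<open>f \<in> A0\<close> by (simp add: A0_def Hinf_def)
  have "0 \<le> Re (f s)" if "s \<in> RHP" for s
    using Re_ge[OF that] \<open>0 < e\<close> by linarith
  then have "f \<in> PR"
    unfolding PR_def using analytic real by blast
  moreover have "(\<lambda>s. f s - of_real e) \<in> PR"
    unfolding PR_def using analytic_on_diff[OF analytic analytic_on_const] real Re_ge
    by (auto intro: Reals_diff)
  ultimately show ?thesis
    unfolding ESPR_def using \<open>f \<in> A0\<close> \<open>0 < e\<close> by blast
qed

lemma washout_PR_A0:
  assumes a: "0 < a"
  shows "(\<lambda>s. s / (s + of_real a)) \<in> PR \<inter> A0"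
proof -
  have nz: "s + of_real a \<noteq> 0" if "0 \<le> Re s" for s
    using mult_add_of_real_neq_0[OF that _ a, of 1] by simp
  have "(\<lambda>s. s / (s + of_real a)) \<in> A0"
  proof (rule A0_I[where L = 1 and C = a])
    show "(\<lambda>s. s / (s + of_real a)) holomorphic_on RHP"
      using nz by (intro holomorphic_intros) (auto simp: RHP_def)
    show "continuous_on cRHP (\<lambda>s. s / (s + of_real a))"
      using nz by (intro continuous_intros) (auto simp: cRHP_def)
    show "cmod (s / (s + of_real a) - 1) \<le> a / cmod (s + of_real a)" if "s \<in> cRHP" for s
    proof -
      have "s / (s + of_real a) - 1 = - of_real a / (s + of_real a)"
        using nz that by (simp add: cRHP_def field_simps)
      then show ?thesis
        using a by (simp add: norm_divide)
    qed
  qed (use a in auto)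
  moreover have "0 \<le> Re (s / (s + of_real a))" if "s \<in> RHP" for s
    using that a unfolding Re_divide by (intro divide_nonneg_nonneg) (auto simp: RHP_def)
  ultimately show ?thesis
    unfolding PR_def A0_def Hinf_def by auto
qed

lemma norm_first_order_le:
  assumes "0 \<le> Re s" "0 \<le> m" "0 < d"
  shows "cmod (of_real \<gamma> / (of_real m * s + of_real d)) \<le> \<bar>\<gamma>\<bar> / d"
  using le_norm_mult_add_of_real[OF assms(1,2), of d] assms(3)
  by (simp add: norm_divide frac_le)

lemma first_order_Hinf:
  assumes "0 \<le> m" "0 < d"
  shows "(\<lambda>s. of_real \<gamma> / (of_real m * s + of_real d)) \<in> Hinf"
proof -
  have "(\<lambda>s. of_real \<gamma> / (of_real m * s + of_real d)) analytic_on RHP"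
    using mult_add_of_real_neq_0[OF _ assms]
    by (subst analytic_on_open[OF open_RHP]) (auto intro!: holomorphic_intros simp: RHP_def)
  moreover have "\<forall>s\<in>RHP. cmod (of_real \<gamma> / (of_real m * s + of_real d)) \<le> \<bar>\<gamma>\<bar> / d"
    using norm_first_order_le[OF _ assms] by (simp add: RHP_def)
  ultimately show ?thesis
    unfolding Hinf_def by blast
qed

lemma Re_washout_quotient:
  fixes s :: complex and m d a \<gamma> :: real
  assumes "0 \<le> Re s" "0 \<le> m" "0 < d"
  shows "Re ((s + of_real \<gamma> / (of_real m * s + of_real d)) / (s + of_real a)) * ((Re s + a)\<^sup>2 + (Im s)\<^sup>2)
    = (Re s)\<^sup>2 + (Im s)\<^sup>2 + a * Re s
      + \<gamma> * ((m * Re s + d) * (Re s + a) - m * (Im s)\<^sup>2) / ((m * Re s + d)\<^sup>2 + m\<^sup>2 * (Im s)\<^sup>2)"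
proof -
  define x y Q where "x = Re s" and "y = Im s" and "Q = (m * x + d)\<^sup>2 + m\<^sup>2 * y\<^sup>2"
  have Q: "0 < Q"
    unfolding Q_def x_def using assms by (rule sum_squares_shift_pos)
  have "Re (of_real \<gamma> / (of_real m * s + of_real d)) = \<gamma> * (m * x + d) / Q"
    "Im (of_real \<gamma> / (of_real m * s + of_real d)) = - (\<gamma> * m * y) / Q"
    unfolding Re_divide Im_divide Q_def x_def y_def by (simp_all add: power_mult_distrib)
  then have "Re ((s + of_real \<gamma> / (of_real m * s + of_real d)) / (s + of_real a)) * ((x + a)\<^sup>2 + y\<^sup>2)
      = (x + \<gamma> * (m * x + d) / Q) * (x + a) + (y - \<gamma> * m * y / Q) * y"
    by (cases "(x + a)\<^sup>2 + y\<^sup>2 = 0") (simp_all add: Re_divide x_def y_def)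
  also have "\<dots> = x\<^sup>2 + y\<^sup>2 + a * x + \<gamma> * ((m * x + d) * (x + a) - m * y\<^sup>2) / Q"
    using Q by (simp add: field_simps power2_eq_square)
  finally show ?thesis
    unfolding x_def y_def Q_def .
qed

lemma eventually_mult_le_at_right_0:
  fixes b c :: real
  assumes "0 < b"
  shows "\<forall>\<^sub>F e in at_right 0. e * c \<le> b"
proof -
  have "((\<lambda>e. e * c) \<longlongrightarrow> 0) (at_right 0)"
    by (intro tendsto_mult_left_zero tendsto_ident_at)
  from order_tendstoD(2)[OF this assms] show ?thesis
    by (rule eventually_mono) simp
qed

lemma Re_washout_quotient_ge:
  fixes m d a \<gamma> :: real
  assumes m: "0 \<le> m" and d: "0 < d" and a: "0 < a" and \<gamma>: "0 < \<gamma>" and \<gamma>_le: "8 * \<gamma> \<le> d * a"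
  obtains e where "0 < e"
    "\<And>s. 0 \<le> Re s \<Longrightarrow> e \<le> Re ((s + of_real \<gamma> / (of_real m * s + of_real d)) / (s + of_real a))"
proof -
  have "\<forall>\<^sub>F e in at_right 0. 0 < e \<and> e * 4 \<le> 1 \<and> e * (2 * a) \<le> 1 \<and> e * (8 * a * m) \<le> d
      \<and> e * (2 * a * ((m + d)\<^sup>2 + m * d * a)) \<le> \<gamma> * d"
    using d \<gamma> by (intro eventually_conj eventually_at_right_less eventually_mult_le_at_right_0) auto
  then obtain e where e: "0 < e" "e * 4 \<le> 1" "e * (2 * a) \<le> 1" "e * (8 * a * m) \<le> d"
    "e * (2 * a * ((m + d)\<^sup>2 + m * d * a)) \<le> \<gamma> * d"
    using eventually_happens' trivial_limit_at_right_real by blast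
  show ?thesis
  proof (rule that[OF \<open>0 < e\<close>])
    fix s :: complex assume s: "0 \<le> Re s"
    have D: "0 < (Re s + a)\<^sup>2 + (Im s)\<^sup>2"
      using s a by (intro add_pos_nonneg) auto
    have "e * ((Re s + a)\<^sup>2 + (Im s)\<^sup>2)
        \<le> Re ((s + of_real \<gamma> / (of_real m * s + of_real d)) / (s + of_real a)) * ((Re s + a)\<^sup>2 + (Im s)\<^sup>2)"
      unfolding Re_washout_quotient[OF s m d] using s m d a \<gamma> \<gamma>_le e(2-5) by (rule washout_real_part_bound)
    then show "e \<le> Re ((s + of_real \<gamma> / (of_real m * s + of_real d)) / (s + of_real a))"
      using D by (rule mult_right_le_imp_le)
  qed
qed

lemma first_order_mem_Pset_washout:
  fixes m d a \<gamma> :: real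
  assumes m: "0 \<le> m" and d: "0 < d" and a: "0 < a" and \<gamma>: "0 < \<gamma>" and \<gamma>_le: "8 * \<gamma> \<le> d * a"
  shows "(\<lambda>s. of_real \<gamma> / (of_real m * s + of_real d)) \<in> Pset (\<lambda>s. s / (s + of_real a))"
proof -
  define p :: "complex \<Rightarrow> complex" where "p s = of_real \<gamma> / (of_real m * s + of_real d)" for s
  define G where "G s = (s + p s) / (s + of_real a)" for s
  have nz: "s + of_real a \<noteq> 0" "of_real m * s + of_real d \<noteq> 0" if "0 \<le> Re s" for s
    using mult_add_of_real_neq_0[OF that _ a, of 1] mult_add_of_real_neq_0[OF that m d] by simp_all
  have eq: "s / (s + of_real a) * (1 + p s / s) = G s" if "s \<in> RHP" for s
  proof -
    have "s \<noteq> 0"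
      using that by (auto simp: RHP_def)
    then have "1 + p s / s = (s + p s) / s"
      by (simp add: field_simps)
    with \<open>s \<noteq> 0\<close> show ?thesis
      unfolding G_def by simp
  qed
  obtain e where "0 < e" and Re_ge: "\<And>s. 0 \<le> Re s \<Longrightarrow> e \<le> Re (G s)"
    using Re_washout_quotient_ge[OF m d a \<gamma> \<gamma>_le] unfolding G_def p_def by blast
  have F_A0: "(\<lambda>s. s / (s + of_real a) * (1 + p s / s)) \<in> A0"
  proof (rule A0_I[where g = G and L = 1 and C = "\<gamma> / d + a"])
    show "G holomorphic_on RHP"
      unfolding G_def p_def using nz by (intro holomorphic_intros) (auto simp: RHP_def)
    show "continuous_on cRHP G"
      unfolding G_def p_def using nz by (intro continuous_intros) (auto simp: cRHP_def)
    show "cmod (G s - 1) \<le> (\<gamma> / d + a) / cmod (s + of_real a)" if "s \<in> cRHP" for s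
    proof -
      have s: "0 \<le> Re s"
        using that by (simp add: cRHP_def)
      have "G s - 1 = (p s - of_real a) / (s + of_real a)"
        unfolding G_def using nz(1)[OF s] by (simp add: field_simps)
      moreover have "cmod (p s - of_real a) \<le> \<gamma> / d + a"
        using norm_triangle_ineq4[of "p s" "of_real a"] norm_first_order_le[OF s m d, of \<gamma>] \<gamma> a
        unfolding p_def by simp
      ultimately show ?thesis
        by (simp add: norm_divide divide_right_mono)
    qed
  qed (use eq a in auto)
  have "(\<lambda>s. s / (s + of_real a) * (1 + p s / s)) \<in> ESPR"
  proof (rule ESPR_I[OF F_A0 _ \<open>0 < e\<close>])
    show "of_real x / (of_real x + of_real a) * (1 + p (of_real x) / of_real x) \<in> \<real>" for x
      unfolding p_def by simp
    show "e \<le> Re (s / (s + of_real a) * (1 + p s / s))" if "s \<in> RHP" for s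
      using eq[OF that] Re_ge that by (simp add: RHP_def)
  qed
  moreover have "p \<in> Hinf"
    unfolding p_def using m d by (rule first_order_Hinf)
  ultimately show ?thesis
    using d \<gamma> unfolding Pset_def p_def by simp
qed

theorem corollary1:
  fixes n :: nat and m d \<gamma> :: "nat \<Rightarrow> real"
  assumes "\<forall>i\<in>{1..n}. m i \<ge> 0"
      and "\<forall>i\<in>{1..n}. d i > 0"
      and "\<forall>i\<in>{1..n}. \<gamma> i > 0"
  shows "\<exists>h. h \<in> PR \<inter> A0 \<and>
           (\<forall>i\<in>{1..n}. (\<lambda>s. complex_of_real (\<gamma> i) /
                              (complex_of_real (m i) * s + complex_of_real (d i))) \<in> Pset h)"
proof -
  define a where "a = 1 + (\<Sum>i\<in>{1..n}. 8 * \<gamma> i / d i)"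
  have terms_nonneg: "0 \<le> 8 * \<gamma> i / d i" if "i \<in> {1..n}" for i
    using assms that by (simp add: less_imp_le)
  then have "0 \<le> (\<Sum>i\<in>{1..n}. 8 * \<gamma> i / d i)"
    by (rule sum_nonneg)
  then have "0 < a"
    unfolding a_def by linarith
  have "8 * \<gamma> i \<le> d i * a" if i: "i \<in> {1..n}" for i
  proof -
    have "8 * \<gamma> i / d i \<le> a"
      unfolding a_def using member_le_sum[OF i, of "\<lambda>i. 8 * \<gamma> i / d i"] terms_nonneg by simp
    then show ?thesis
      using assms i by (simp add: pos_divide_le_eq mult.commute)
  qed
  then show ?thesis
    using washout_PR_A0[OF \<open>0 < a\<close>] first_order_mem_Pset_washout \<open>0 < a\<close> assms by blast
qed

end
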